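(* Let $\mathbf C$ be an $r$-regular category, $f:Y\to X$ an arrow and $Z$ an object, and consider the pullback square formed by $f\times 1_Z:Y\times Z\to X\times Z$, $\pi_Y:Y\times Z\to Y$, $\pi_X:X\times Z\to X$ and $f$. Let $S\in\mathsf{Sub}_r(X\times Z)$ and let $B_1,\dots,B_n\in\mathsf{Sub}_r(X)$ satisfy: (a) $\pi_X^{-1}(B_i)\le S$ for all $i$, and (b) for every $D\in\mathsf{Sub}_r(X)$ with $\pi_X^{-1}(D)\le S$ there is $i$ with $D\le B_i$. Then $f^{-1}(B_1),\dots,f^{-1}(B_n)\in\mathsf{Sub}_r(Y)$ satisfy the same properties with respect to $(f\times 1)^{-1}(S)$: (a') $\pi_Y^{-1}(f^{-1}(B_i))\le(f\times 1)^{-1}(S)$ for all $i$, and (b') for every $D\in\mathsf{Sub}_r(Y)$ with $\pi_Y^{-1}(D)\le(f\times1)^{-1}(S)$ there is $i$ with $D\le f^{-1}(B_i)$.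
   Context: A category is $r$-regular if it has all finite limits, epimorphisms are stable under pullback, and every arrow factors as an epimorphism followed by a regular monomorphism. $\mathsf{Sub}_r(X)$ is the poset of regular subobjects of $X$ and, for an arrow $g:Y\to X$, $g^{-1}:\mathsf{Sub}_r(X)\to\mathsf{Sub}_r(Y)$ is pullback along $g$; $\pi_X$, $\pi_Y$ are product projections. *)

theory Defs
  imports Main
begin

text \<open>Categories given explicitly by objects, arrows, domain, codomain,
composition (Comp g f = g after f) and identities.\<close>

record ('o,'a) cat =
  Ob :: "'o set"
  Ar :: "'a set"
  Dom :: "'a \<Rightarrow> 'o"
  Cod :: "'a \<Rightarrow> 'o"
  Comp :: "'a \<Rightarrow> 'a \<Rightarrow> 'a"
  Ident :: "'o \<Rightarrow> 'a"

definition hom :: "('o,'a) cat \<Rightarrow> 'o \<Rightarrow> 'o \<Rightarrow> 'a set" where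
  "hom C x y = {f \<in> Ar C. Dom C f = x \<and> Cod C f = y}"

definition is_category :: "('o,'a) cat \<Rightarrow> bool" where
  "is_category C \<longleftrightarrow>
     (\<forall>f \<in> Ar C. Dom C f \<in> Ob C \<and> Cod C f \<in> Ob C) \<and>
     (\<forall>x \<in> Ob C. Ident C x \<in> hom C x x) \<and>
     (\<forall>f \<in> Ar C. \<forall>g \<in> Ar C. Cod C f = Dom C g \<longrightarrow>
        Comp C g f \<in> hom C (Dom C f) (Cod C g)) \<and>
     (\<forall>f \<in> Ar C. \<forall>g \<in> Ar C. \<forall>h \<in> Ar C. Cod C f = Dom C g \<and> Cod C g = Dom C h \<longrightarrow>
        Comp C h (Comp C g f) = Comp C (Comp C h g) f) \<and>
     (\<forall>f \<in> Ar C. Comp C (Ident C (Cod C f)) f = f \<and> Comp C f (Ident C (Dom C f)) = f)"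

definition mono :: "('o,'a) cat \<Rightarrow> 'a \<Rightarrow> bool" where
  "mono C m \<longleftrightarrow> m \<in> Ar C \<and>
     (\<forall>g \<in> Ar C. \<forall>h \<in> Ar C. Cod C g = Dom C m \<and> Cod C h = Dom C m \<and> Dom C g = Dom C h
        \<and> Comp C m g = Comp C m h \<longrightarrow> g = h)"

definition epi :: "('o,'a) cat \<Rightarrow> 'a \<Rightarrow> bool" where
  "epi C e \<longleftrightarrow> e \<in> Ar C \<and>
     (\<forall>g \<in> Ar C. \<forall>h \<in> Ar C. Dom C g = Cod C e \<and> Dom C h = Cod C e \<and> Cod C g = Cod C h
        \<and> Comp C g e = Comp C h e \<longrightarrow> g = h)"

definition is_pullback :: "('o,'a) cat \<Rightarrow> 'a \<Rightarrow> 'a \<Rightarrow> 'a \<Rightarrow> 'a \<Rightarrow> bool" where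
  "is_pullback C f g p q \<longleftrightarrow>
     f \<in> Ar C \<and> g \<in> Ar C \<and> p \<in> Ar C \<and> q \<in> Ar C \<and>
     Cod C f = Cod C g \<and> Cod C p = Dom C f \<and> Cod C q = Dom C g \<and> Dom C p = Dom C q \<and>
     Comp C f p = Comp C g q \<and>
     (\<forall>a \<in> Ar C. \<forall>b \<in> Ar C. Cod C a = Dom C f \<and> Cod C b = Dom C g \<and> Dom C a = Dom C b
        \<and> Comp C f a = Comp C g b \<longrightarrow>
        (\<exists>!u. u \<in> hom C (Dom C a) (Dom C p) \<and> Comp C p u = a \<and> Comp C q u = b))"

definition is_equalizer :: "('o,'a) cat \<Rightarrow> 'a \<Rightarrow> 'a \<Rightarrow> 'a \<Rightarrow> bool" where
  "is_equalizer C f g e \<longleftrightarrow>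
     f \<in> Ar C \<and> g \<in> Ar C \<and> e \<in> Ar C \<and>
     Dom C f = Dom C g \<and> Cod C f = Cod C g \<and> Cod C e = Dom C f \<and>
     Comp C f e = Comp C g e \<and>
     (\<forall>a \<in> Ar C. Cod C a = Dom C f \<and> Comp C f a = Comp C g a \<longrightarrow>
        (\<exists>!u. u \<in> hom C (Dom C a) (Dom C e) \<and> Comp C e u = a))"

definition regular_mono :: "('o,'a) cat \<Rightarrow> 'a \<Rightarrow> bool" where
  "regular_mono C m \<longleftrightarrow> (\<exists>f g. is_equalizer C f g m)"

definition is_terminal :: "('o,'a) cat \<Rightarrow> 'o \<Rightarrow> bool" where
  "is_terminal C t \<longleftrightarrow> t \<in> Ob C \<and> (\<forall>x \<in> Ob C. \<exists>!u. u \<in> hom C x t)"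

definition is_product :: "('o,'a) cat \<Rightarrow> 'o \<Rightarrow> 'o \<Rightarrow> 'o \<Rightarrow> 'a \<Rightarrow> 'a \<Rightarrow> bool" where
  "is_product C X Y P p1 p2 \<longleftrightarrow>
     P \<in> Ob C \<and> p1 \<in> hom C P X \<and> p2 \<in> hom C P Y \<and>
     (\<forall>Q \<in> Ob C. \<forall>a \<in> hom C Q X. \<forall>b \<in> hom C Q Y.
        (\<exists>!u. u \<in> hom C Q P \<and> Comp C p1 u = a \<and> Comp C p2 u = b))"

definition has_finite_limits :: "('o,'a) cat \<Rightarrow> bool" where
  "has_finite_limits C \<longleftrightarrow>
     (\<exists>t. is_terminal C t) \<and>
     (\<forall>X \<in> Ob C. \<forall>Y \<in> Ob C. \<exists>P p1 p2. is_product C X Y P p1 p2) \<and>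
     (\<forall>f \<in> Ar C. \<forall>g \<in> Ar C. Dom C f = Dom C g \<and> Cod C f = Cod C g \<longrightarrow>
        (\<exists>e. is_equalizer C f g e))"

definition r_regular :: "('o,'a) cat \<Rightarrow> bool" where
  "r_regular C \<longleftrightarrow> is_category C \<and> has_finite_limits C \<and>
     (\<forall>f g p q. is_pullback C f g p q \<and> epi C g \<longrightarrow> epi C p) \<and>
     (\<forall>f \<in> Ar C. \<exists>e m. epi C e \<and> regular_mono C m \<and> Dom C m = Cod C e \<and> Comp C m e = f)"

text \<open>Regular subobjects of X are represented by regular monos with codomain X;
  all notions below are invariant under isomorphism of representatives.\<close>
definition reg_sub :: "('o,'a) cat \<Rightarrow> 'o \<Rightarrow> 'a set" where
  "reg_sub C X = {m. regular_mono C m \<and> Cod C m = X}"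

definition sub_le :: "('o,'a) cat \<Rightarrow> 'a \<Rightarrow> 'a \<Rightarrow> bool" where
  "sub_le C m n \<longleftrightarrow> (\<exists>u. u \<in> hom C (Dom C m) (Dom C n) \<and> Comp C n u = m)"

definition inv_img :: "('o,'a) cat \<Rightarrow> 'a \<Rightarrow> 'a \<Rightarrow> 'a" where
  "inv_img C g m = (SOME q. \<exists>p. is_pullback C m g p q)"

end

theory Submission
  imports Defs
begin

(* Given D <= Y with pi_Y^-1(D) <= (f x 1)^-1(S), take the (epi, regular mono) image m of
   f o D.  Pulling the epi back along pi_X^-1(m) -> m yields an epi onto the domain of
   pi_X^-1(m) whose composite with pi_X^-1(m) lifts, through the pullback square of f x 1,
   into pi_Y^-1(D) and hence lands in S.  Regular subobjects are orthogonal to epis, so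
   pi_X^-1(m) <= S; property (b) gives m <= B_i, whence D <= f^-1(B_i).  Property (a')
   is a diagram chase through the same square. *)

lemma ex1_unique: "\<exists>!x. P x \<Longrightarrow> P a \<Longrightarrow> P b \<Longrightarrow> a = b"
  by blast

locale category =
  fixes C :: "('o,'a) cat"
  assumes is_category: "is_category C"
begin

abbreviation comp (infixr "\<cdot>" 55) where "g \<cdot> f \<equiv> Comp C g f"

lemma hom_iff: "u \<in> hom C a b \<longleftrightarrow> u \<in> Ar C \<and> Dom C u = a \<and> Cod C u = b"
  by (simp add: hom_def)

lemma dom_in_Ob: "f \<in> Ar C \<Longrightarrow> Dom C f \<in> Ob C"
  using is_category by (simp add: is_category_def)

lemma comp_in_hom:
  "f \<in> Ar C \<Longrightarrow> g \<in> Ar C \<Longrightarrow> Cod C f = Dom C g \<Longrightarrow> g \<cdot> f \<in> hom C (Dom C f) (Cod C g)"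
  using is_category unfolding is_category_def by blast

lemma comp_arr:
  assumes "f \<in> Ar C" "g \<in> Ar C" "Cod C f = Dom C g"
  shows "g \<cdot> f \<in> Ar C" "Dom C (g \<cdot> f) = Dom C f" "Cod C (g \<cdot> f) = Cod C g"
  using comp_in_hom[OF assms] by (simp_all add: hom_def)

lemma comp_assoc:
  "f \<in> Ar C \<Longrightarrow> g \<in> Ar C \<Longrightarrow> h \<in> Ar C \<Longrightarrow> Cod C f = Dom C g \<Longrightarrow> Cod C g = Dom C h \<Longrightarrow>
   h \<cdot> (g \<cdot> f) = (h \<cdot> g) \<cdot> f"
  using is_category unfolding is_category_def by blast

lemma ident_in_hom: "x \<in> Ob C \<Longrightarrow> Ident C x \<in> hom C x x"
  using is_category unfolding is_category_def by blast

lemma comp_ident_right: "f \<in> Ar C \<Longrightarrow> f \<cdot> Ident C (Dom C f) = f"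
  using is_category unfolding is_category_def by blast

lemma sub_le_refl: "x \<in> Ar C \<Longrightarrow> sub_le C x x"
  unfolding sub_le_def using ident_in_hom[OF dom_in_Ob] comp_ident_right by blast

lemma sub_le_comp:
  "x \<in> Ar C \<Longrightarrow> y \<in> Ar C \<Longrightarrow> Cod C y = Dom C x \<Longrightarrow> sub_le C (x \<cdot> y) x"
  unfolding sub_le_def hom_iff by (auto simp: comp_arr)

lemma sub_le_trans:
  assumes "sub_le C x y" "sub_le C y z" "y \<in> Ar C" "z \<in> Ar C"
  shows "sub_le C x z"
proof -
  obtain u where u: "u \<in> Ar C" "Dom C u = Dom C x" "Cod C u = Dom C y" "y \<cdot> u = x"
    using assms(1) unfolding sub_le_def hom_iff by blast
  obtain v where v: "v \<in> Ar C" "Dom C v = Dom C y" "Cod C v = Dom C z" "z \<cdot> v = y"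
    using assms(2) unfolding sub_le_def hom_iff by blast
  have "z \<cdot> (v \<cdot> u) = x" using u v assms by (simp add: comp_assoc)
  then show ?thesis
    using u v unfolding sub_le_def hom_iff by (metis comp_arr)
qed

lemma pullbackD:
  assumes "is_pullback C m g p q"
  shows "m \<in> Ar C" "g \<in> Ar C" "p \<in> Ar C" "q \<in> Ar C" "Cod C m = Cod C g" "Cod C p = Dom C m"
    "Cod C q = Dom C g" "Dom C p = Dom C q" "m \<cdot> p = g \<cdot> q"
  using assms unfolding is_pullback_def by auto

lemma pullback_lift_unique:
  assumes "is_pullback C m g p q" "a \<in> Ar C" "b \<in> Ar C" "Cod C a = Dom C m" "Cod C b = Dom C g"
    "Dom C a = Dom C b" "m \<cdot> a = g \<cdot> b"
  shows "\<exists>!u. u \<in> hom C (Dom C a) (Dom C p) \<and> p \<cdot> u = a \<and> q \<cdot> u = b"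
  using assms unfolding is_pullback_def by blast

lemma pullback_lift:
  assumes "is_pullback C m g p q" "a \<in> Ar C" "b \<in> Ar C" "Cod C a = Dom C m" "Cod C b = Dom C g"
    "Dom C a = Dom C b" "m \<cdot> a = g \<cdot> b"
  obtains u where "u \<in> hom C (Dom C a) (Dom C p)" "p \<cdot> u = a" "q \<cdot> u = b"
  using pullback_lift_unique[OF assms] by blast

lemma sub_le_pullback_iff:
  assumes pb: "is_pullback C m g p q" and x: "x \<in> Ar C" "Cod C x = Dom C g"
  shows "sub_le C x q \<longleftrightarrow> sub_le C (g \<cdot> x) m"
proof
  note pb' = pullbackD[OF pb]
  assume "sub_le C x q"
  then obtain u where u: "u \<in> Ar C" "Dom C u = Dom C x" "Cod C u = Dom C q" "q \<cdot> u = x"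
    unfolding sub_le_def hom_iff by blast
  have "m \<cdot> (p \<cdot> u) = (g \<cdot> q) \<cdot> u" using u pb' by (simp add: comp_assoc)
  also have "\<dots> = g \<cdot> x" using u pb' by (simp add: comp_assoc[symmetric])
  finally have "m \<cdot> (p \<cdot> u) = g \<cdot> x" .
  then show "sub_le C (g \<cdot> x) m"
    using u pb' x unfolding sub_le_def hom_iff by (metis comp_arr)
next
  note pb' = pullbackD[OF pb]
  assume "sub_le C (g \<cdot> x) m"
  then obtain v where v: "v \<in> Ar C" "Dom C v = Dom C (g \<cdot> x)" "Cod C v = Dom C m" "m \<cdot> v = g \<cdot> x"
    unfolding sub_le_def hom_iff by blast
  have "Dom C v = Dom C x" using v x pb' by (simp add: comp_arr)
  then show "sub_le C x q"
    using pullback_lift[OF pb v(1) x(1) v(3) x(2) _ v(4)] pb' unfolding sub_le_def by auto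
qed

lemma equalizerD:
  assumes "is_equalizer C s1 s2 e"
  shows "s1 \<in> Ar C" "s2 \<in> Ar C" "e \<in> Ar C" "Dom C s1 = Dom C s2" "Cod C s1 = Cod C s2"
    "Cod C e = Dom C s1" "s1 \<cdot> e = s2 \<cdot> e"
  using assms unfolding is_equalizer_def by auto

lemma equalizer_lift_unique:
  assumes "is_equalizer C s1 s2 e" "a \<in> Ar C" "Cod C a = Dom C s1" "s1 \<cdot> a = s2 \<cdot> a"
  shows "\<exists>!u. u \<in> hom C (Dom C a) (Dom C e) \<and> e \<cdot> u = a"
  using assms unfolding is_equalizer_def by blast

lemma sub_le_equalizer_iff:
  assumes eq: "is_equalizer C s1 s2 e" and x: "x \<in> Ar C" "Cod C x = Dom C s1"
  shows "sub_le C x e \<longleftrightarrow> s1 \<cdot> x = s2 \<cdot> x"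
proof
  assume "sub_le C x e"
  then obtain u where u: "u \<in> Ar C" "Cod C u = Dom C e" "e \<cdot> u = x"
    unfolding sub_le_def hom_iff by blast
  have "s1 \<cdot> (e \<cdot> u) = s2 \<cdot> (e \<cdot> u)" using u(1,2) equalizerD[OF eq] by (simp add: comp_assoc)
  then show "s1 \<cdot> x = s2 \<cdot> x" using u(3) by simp
next
  assume "s1 \<cdot> x = s2 \<cdot> x"
  then show "sub_le C x e" using equalizer_lift_unique[OF eq x] unfolding sub_le_def by blast
qed

lemma regular_mono_arr: "regular_mono C m \<Longrightarrow> m \<in> Ar C"
  unfolding regular_mono_def using equalizerD by blast

lemma productD:
  assumes "is_product C X Y P p1 p2"
  shows "P \<in> Ob C" "p1 \<in> Ar C" "p2 \<in> Ar C" "Dom C p1 = P" "Dom C p2 = P" "Cod C p1 = X" "Cod C p2 = Y"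
  using assms unfolding is_product_def hom_iff by auto

lemma product_lift_unique:
  assumes "is_product C X Y P p1 p2" "a \<in> Ar C" "b \<in> Ar C" "Dom C a = Dom C b"
    "Cod C a = X" "Cod C b = Y"
  shows "\<exists>!u. u \<in> hom C (Dom C a) P \<and> p1 \<cdot> u = a \<and> p2 \<cdot> u = b"
proof -
  have "Dom C a \<in> Ob C" "a \<in> hom C (Dom C a) X" "b \<in> hom C (Dom C a) Y"
    using assms dom_in_Ob by (auto simp: hom_iff)
  then show ?thesis using assms(1) unfolding is_product_def by blast
qed

lemma product_arr_eq:
  assumes pr: "is_product C X Y P p1 p2" and uv: "u \<in> hom C Q P" "v \<in> hom C Q P"
    and "p1 \<cdot> u = p1 \<cdot> v" "p2 \<cdot> u = p2 \<cdot> v"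
  shows "u = v"
proof -
  note pr' = productD[OF pr]
  have pu: "p1 \<cdot> u \<in> Ar C" "p2 \<cdot> u \<in> Ar C" "Dom C (p1 \<cdot> u) = Q" "Dom C (p2 \<cdot> u) = Q"
    "Cod C (p1 \<cdot> u) = X" "Cod C (p2 \<cdot> u) = Y"
    using uv pr' by (auto simp: hom_iff comp_arr)
  have "\<exists>!w. w \<in> hom C Q P \<and> p1 \<cdot> w = p1 \<cdot> u \<and> p2 \<cdot> w = p2 \<cdot> u"
    using product_lift_unique[OF pr pu(1,2) _ pu(5,6)] pu(3,4) by simp
  then show ?thesis by (rule ex1_unique) (use uv assms(4,5) in simp_all)
qed

lemma equalizer_cancel:
  assumes eq: "is_equalizer C s1 s2 e" and uw: "u \<in> hom C Q (Dom C e)" "w \<in> hom C Q (Dom C e)"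
    and "e \<cdot> u = e \<cdot> w"
  shows "u = w"
proof -
  note eq' = equalizerD[OF eq]
  have eu: "e \<cdot> u \<in> Ar C" "Cod C (e \<cdot> u) = Dom C s1" "Dom C (e \<cdot> u) = Q"
    using uw eq' by (auto simp: hom_iff comp_arr)
  have "s1 \<cdot> (e \<cdot> u) = s2 \<cdot> (e \<cdot> u)"
    using uw eq' by (simp add: hom_iff comp_assoc)
  then have "\<exists>!z. z \<in> hom C Q (Dom C e) \<and> e \<cdot> z = e \<cdot> u"
    using equalizer_lift_unique[OF eq eu(1,2)] eu(3) by simp
  then show ?thesis by (rule ex1_unique) (use uw assms(4) in simp_all)
qed

lemma pullback_exists:
  assumes lim: "has_finite_limits C" and m: "m \<in> Ar C" and g: "g \<in> Ar C"
    and cod: "Cod C m = Cod C g"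
  shows "\<exists>p q. is_pullback C m g p q"
proof -
  have products: "\<forall>X \<in> Ob C. \<forall>Y \<in> Ob C. \<exists>P p1 p2. is_product C X Y P p1 p2"
    and equalizers: "\<forall>f \<in> Ar C. \<forall>g \<in> Ar C. Dom C f = Dom C g \<and> Cod C f = Cod C g \<longrightarrow>
        (\<exists>e. is_equalizer C f g e)"
    using lim unfolding has_finite_limits_def by blast+
  obtain P p1 p2 where pr: "is_product C (Dom C m) (Dom C g) P p1 p2"
    using products dom_in_Ob[OF m] dom_in_Ob[OF g] by blast
  note pr' = productD[OF pr]
  have mp: "m \<cdot> p1 \<in> Ar C" "Dom C (m \<cdot> p1) = P" "Cod C (m \<cdot> p1) = Cod C m"
    and gp: "g \<cdot> p2 \<in> Ar C" "Dom C (g \<cdot> p2) = P" "Cod C (g \<cdot> p2) = Cod C m"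
    using pr' m g cod by (auto simp: comp_arr)
  then obtain e where eq: "is_equalizer C (m \<cdot> p1) (g \<cdot> p2) e"
    using equalizers by force
  note eq' = equalizerD[OF eq]
  have e: "Cod C e = P" using eq' mp by simp
  have pe: "p1 \<cdot> e \<in> Ar C" "p2 \<cdot> e \<in> Ar C" "Cod C (p1 \<cdot> e) = Dom C m"
    "Cod C (p2 \<cdot> e) = Dom C g" "Dom C (p1 \<cdot> e) = Dom C e" "Dom C (p2 \<cdot> e) = Dom C e"
    using pr' eq' e by (simp_all add: comp_arr)
  have "is_pullback C m g (p1 \<cdot> e) (p2 \<cdot> e)"
    unfolding is_pullback_def
  proof (intro conjI ballI impI)
    show "m \<in> Ar C" "g \<in> Ar C" "Cod C m = Cod C g" using m g cod .
    show "p1 \<cdot> e \<in> Ar C" "p2 \<cdot> e \<in> Ar C" "Cod C (p1 \<cdot> e) = Dom C m"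
      "Cod C (p2 \<cdot> e) = Dom C g" "Dom C (p1 \<cdot> e) = Dom C (p2 \<cdot> e)"
      using pe by simp_all
  next
    have "m \<cdot> (p1 \<cdot> e) = (m \<cdot> p1) \<cdot> e" using eq' pr' m e by (simp add: comp_assoc)
    also have "\<dots> = (g \<cdot> p2) \<cdot> e" using eq' by simp
    also have "\<dots> = g \<cdot> (p2 \<cdot> e)" using eq' pr' g e by (simp add: comp_assoc)
    finally show "m \<cdot> (p1 \<cdot> e) = g \<cdot> (p2 \<cdot> e)" .
  next
    fix a b assume ab: "a \<in> Ar C" "b \<in> Ar C"
      and sq: "Cod C a = Dom C m \<and> Cod C b = Dom C g \<and> Dom C a = Dom C b \<and> m \<cdot> a = g \<cdot> b"
    obtain k where k: "k \<in> hom C (Dom C a) P" "p1 \<cdot> k = a" "p2 \<cdot> k = b"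
      using product_lift_unique[OF pr ab] sq by blast
    have k': "k \<in> Ar C" "Dom C k = Dom C a" "Cod C k = P" using k by (auto simp: hom_iff)
    have "(m \<cdot> p1) \<cdot> k = (g \<cdot> p2) \<cdot> k"
      using k k' pr' m g sq by (simp add: comp_assoc[symmetric])
    then obtain u where u: "u \<in> hom C (Dom C a) (Dom C e)" "e \<cdot> u = k"
      using equalizer_lift_unique[OF eq k'(1)] k' mp by auto
    have lifts: "(p1 \<cdot> e) \<cdot> w = p1 \<cdot> (e \<cdot> w)" "(p2 \<cdot> e) \<cdot> w = p2 \<cdot> (e \<cdot> w)"
      if "w \<in> hom C (Dom C a) (Dom C e)" for w
      using that pr' eq' e by (simp_all add: hom_iff comp_assoc comp_arr)
    show "\<exists>!u. u \<in> hom C (Dom C a) (Dom C (p1 \<cdot> e)) \<and> (p1 \<cdot> e) \<cdot> u = a \<and> (p2 \<cdot> e) \<cdot> u = b"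
    proof (rule ex1I[of _ u])
      show "u \<in> hom C (Dom C a) (Dom C (p1 \<cdot> e)) \<and> (p1 \<cdot> e) \<cdot> u = a \<and> (p2 \<cdot> e) \<cdot> u = b"
        using u k lifts[OF u(1)] pe(5) by simp
    next
      fix w assume w: "w \<in> hom C (Dom C a) (Dom C (p1 \<cdot> e)) \<and> (p1 \<cdot> e) \<cdot> w = a \<and> (p2 \<cdot> e) \<cdot> w = b"
      then have w': "w \<in> hom C (Dom C a) (Dom C e)" using pe(5) by simp
      have "e \<cdot> w \<in> hom C (Dom C a) P"
        using w' eq' e by (auto simp: hom_iff comp_arr)
      moreover have "p1 \<cdot> (e \<cdot> w) = p1 \<cdot> k" "p2 \<cdot> (e \<cdot> w) = p2 \<cdot> k"
        using lifts[OF w'] w k by simp_all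
      ultimately have "e \<cdot> w = e \<cdot> u"
        using product_arr_eq[OF pr _ k(1)] u(2) by simp
      then show "w = u" using equalizer_cancel[OF eq w' u(1)] by simp
    qed
  qed
  then show ?thesis by blast
qed

lemma equalizer_pullback:
  assumes pb: "is_pullback C m g p q" and eq: "is_equalizer C s1 s2 m"
  shows "is_equalizer C (s1 \<cdot> g) (s2 \<cdot> g) q"
proof -
  note pb' = pullbackD[OF pb] and eq' = equalizerD[OF eq]
  have sg: "s1 \<cdot> g \<in> Ar C" "s2 \<cdot> g \<in> Ar C" "Dom C (s1 \<cdot> g) = Dom C g"
    "Dom C (s2 \<cdot> g) = Dom C g" "Cod C (s1 \<cdot> g) = Cod C (s2 \<cdot> g)"
    using pb' eq' by (simp_all add: comp_arr)
  show ?thesis unfolding is_equalizer_def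
  proof (intro conjI ballI impI)
    show "s1 \<cdot> g \<in> Ar C" "s2 \<cdot> g \<in> Ar C" "q \<in> Ar C" "Dom C (s1 \<cdot> g) = Dom C (s2 \<cdot> g)"
      "Cod C (s1 \<cdot> g) = Cod C (s2 \<cdot> g)" "Cod C q = Dom C (s1 \<cdot> g)"
      using sg pb' by simp_all
    have "(s1 \<cdot> g) \<cdot> q = s1 \<cdot> (g \<cdot> q)" using pb' eq' by (simp add: comp_assoc)
    also have "\<dots> = (s1 \<cdot> m) \<cdot> p" using pb'(1-8) eq' by (simp add: comp_assoc flip: pb'(9))
    also have "\<dots> = (s2 \<cdot> m) \<cdot> p" using eq' by simp
    also have "\<dots> = s2 \<cdot> (g \<cdot> q)" using pb'(1-8) eq' by (simp add: comp_assoc flip: pb'(9))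
    also have "\<dots> = (s2 \<cdot> g) \<cdot> q" using pb' eq' by (simp add: comp_assoc)
    finally show "(s1 \<cdot> g) \<cdot> q = (s2 \<cdot> g) \<cdot> q" .
  next
    fix a assume a: "a \<in> Ar C" "Cod C a = Dom C (s1 \<cdot> g) \<and> (s1 \<cdot> g) \<cdot> a = (s2 \<cdot> g) \<cdot> a"
    have ca: "Cod C a = Dom C g" using a sg by simp
    have gs: "Cod C g = Dom C s1" "Cod C g = Dom C s2" using pb'(5) eq'(4,6) by simp_all
    have ga: "g \<cdot> a \<in> Ar C" "Cod C (g \<cdot> a) = Dom C s1" "Dom C (g \<cdot> a) = Dom C a"
      using a(1) ca pb'(2) gs by (simp_all add: comp_arr)
    have "s1 \<cdot> (g \<cdot> a) = s2 \<cdot> (g \<cdot> a)"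
      using a ca pb'(2) eq'(1,2) gs by (simp add: comp_assoc)
    then obtain v where v: "v \<in> hom C (Dom C a) (Dom C m)" "m \<cdot> v = g \<cdot> a"
      using equalizer_lift_unique[OF eq ga(1,2)] ga(3) by auto
    have v': "v \<in> Ar C" "Dom C v = Dom C a" "Cod C v = Dom C m" using v by (simp_all add: hom_iff)
    have lift: "\<exists>!z. z \<in> hom C (Dom C a) (Dom C p) \<and> p \<cdot> z = v \<and> q \<cdot> z = a"
      using pullback_lift_unique[OF pb v'(1) a(1) v'(3) ca v'(2) v(2)] v'(2) by simp
    then obtain u where u: "u \<in> hom C (Dom C a) (Dom C p)" "p \<cdot> u = v" "q \<cdot> u = a"
      by blast
    show "\<exists>!u. u \<in> hom C (Dom C a) (Dom C q) \<and> q \<cdot> u = a"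
    proof (rule ex1I[of _ u])
      show "u \<in> hom C (Dom C a) (Dom C q) \<and> q \<cdot> u = a" using u pb' by simp
    next
      fix w assume w: "w \<in> hom C (Dom C a) (Dom C q) \<and> q \<cdot> w = a"
      then have w': "w \<in> Ar C" "Dom C w = Dom C a" "Cod C w = Dom C p"
        using pb' by (simp_all add: hom_iff)
      have "m \<cdot> (p \<cdot> w) = g \<cdot> (q \<cdot> w)"
        using w' pb' by (simp add: comp_assoc)
      then have "m \<cdot> (p \<cdot> w) = m \<cdot> v" using w v(2) by simp
      moreover have "p \<cdot> w \<in> hom C (Dom C a) (Dom C m)"
        using w' pb' by (simp add: hom_iff comp_arr)
      ultimately have "p \<cdot> w = v"
        using equalizer_cancel[OF eq _ v(1)] by simp
      show "w = u" by (rule ex1_unique[OF lift]) (use \<open>p \<cdot> w = v\<close> u w w' pb' in \<open>simp_all add: hom_iff\<close>)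
    qed
  qed
qed

lemma sub_le_equalizer_cancel_epi:
  assumes eq: "is_equalizer C s1 s2 S" and k: "epi C k" and q: "q \<in> Ar C"
    and cod: "Cod C k = Dom C q" "Cod C q = Cod C S" and le: "sub_le C (q \<cdot> k) S"
  shows "sub_le C q S"
proof -
  note eq' = equalizerD[OF eq]
  have k': "k \<in> Ar C" using k unfolding epi_def by blast
  have "s1 \<cdot> (q \<cdot> k) = s2 \<cdot> (q \<cdot> k)"
    using le sub_le_equalizer_iff[OF eq] k' q cod eq' by (simp add: comp_arr)
  then have "(s1 \<cdot> q) \<cdot> k = (s2 \<cdot> q) \<cdot> k"
    using k' q cod eq' by (simp add: comp_assoc)
  moreover have "s1 \<cdot> q \<in> Ar C" "s2 \<cdot> q \<in> Ar C" "Dom C (s1 \<cdot> q) = Cod C k"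
    "Dom C (s2 \<cdot> q) = Cod C k" "Cod C (s1 \<cdot> q) = Cod C (s2 \<cdot> q)"
    using q cod eq' by (auto simp: comp_arr)
  ultimately have "s1 \<cdot> q = s2 \<cdot> q" using k unfolding epi_def by blast
  then show ?thesis using sub_le_equalizer_iff[OF eq q] cod eq' by simp
qed

lemma product_square_is_pullback:
  assumes prodX: "is_product C X Z XZ piX pZX" and prodY: "is_product C Y Z YZ piY pZY"
    and f: "f \<in> hom C Y X" and fz: "fz \<in> hom C YZ XZ" "piX \<cdot> fz = f \<cdot> piY" "pZX \<cdot> fz = pZY"
  shows "is_pullback C piX f fz piY"
  unfolding is_pullback_def
proof (intro conjI ballI impI)
  note px = productD[OF prodX] and py = productD[OF prodY]
  have f': "f \<in> Ar C" "Dom C f = Y" "Cod C f = X" and fz': "fz \<in> Ar C" "Dom C fz = YZ" "Cod C fz = XZ"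
    using f fz(1) by (simp_all add: hom_iff)
  show "piX \<in> Ar C" "f \<in> Ar C" "fz \<in> Ar C" "piY \<in> Ar C" "Cod C piX = Cod C f"
    "Cod C fz = Dom C piX" "Cod C piY = Dom C f" "Dom C fz = Dom C piY" "piX \<cdot> fz = f \<cdot> piY"
    using px py f' fz' fz(2) by simp_all
  fix a b assume ab: "a \<in> Ar C" "b \<in> Ar C"
    and sq: "Cod C a = Dom C piX \<and> Cod C b = Dom C f \<and> Dom C a = Dom C b \<and> piX \<cdot> a = f \<cdot> b"
  have za: "pZX \<cdot> a \<in> Ar C" "Dom C (pZX \<cdot> a) = Dom C b" "Cod C (pZX \<cdot> a) = Z"
    using ab sq px by (simp_all add: comp_arr)
  have fz_comp: "piX \<cdot> (fz \<cdot> w) = f \<cdot> (piY \<cdot> w)" "pZX \<cdot> (fz \<cdot> w) = pZY \<cdot> w"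
    if "w \<in> hom C (Dom C b) YZ" for w
  proof -
    have w: "w \<in> Ar C" "Cod C w = YZ" using that by (simp_all add: hom_iff)
    have "piX \<cdot> (fz \<cdot> w) = (f \<cdot> piY) \<cdot> w"
      using w px fz' fz(2) by (simp add: comp_assoc)
    also have "\<dots> = f \<cdot> (piY \<cdot> w)" using w py f' by (simp add: comp_assoc)
    finally show "piX \<cdot> (fz \<cdot> w) = f \<cdot> (piY \<cdot> w)" .
    show "pZX \<cdot> (fz \<cdot> w) = pZY \<cdot> w" using w px fz' fz(3) by (simp add: comp_assoc)
  qed
  have fz_hom: "fz \<cdot> w \<in> hom C (Dom C b) XZ" if "w \<in> hom C (Dom C b) YZ" for w
    using that fz' by (simp add: hom_iff comp_arr)
  have a_hom: "a \<in> hom C (Dom C b) XZ" using ab sq px by (simp add: hom_iff)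
  obtain w where w: "w \<in> hom C (Dom C b) YZ" "piY \<cdot> w = b" "pZY \<cdot> w = pZX \<cdot> a"
    using product_lift_unique[OF prodY ab(2) za(1) za(2)[symmetric]] sq f' za by auto
  show "\<exists>!u. u \<in> hom C (Dom C a) (Dom C fz) \<and> fz \<cdot> u = a \<and> piY \<cdot> u = b"
  proof (rule ex1I[of _ w])
    have "fz \<cdot> w = a"
      using product_arr_eq[OF prodX fz_hom[OF w(1)] a_hom] fz_comp[OF w(1)] w sq by simp
    then show "w \<in> hom C (Dom C a) (Dom C fz) \<and> fz \<cdot> w = a \<and> piY \<cdot> w = b"
      using w sq fz' by simp
  next
    fix v assume v: "v \<in> hom C (Dom C a) (Dom C fz) \<and> fz \<cdot> v = a \<and> piY \<cdot> v = b"
    then have v': "v \<in> hom C (Dom C b) YZ" using sq fz' by simp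
    have "pZY \<cdot> v = pZY \<cdot> w" using fz_comp(2)[OF v'] v w(3) by simp
    then show "v = w" using product_arr_eq[OF prodY v' w(1)] v w(2) by simp
  qed
qed

end

locale r_regular_category =
  fixes C :: "('o,'a) cat"
  assumes r_regular: "r_regular C"

sublocale r_regular_category \<subseteq> category
  using r_regular by unfold_locales (simp add: r_regular_def)

context r_regular_category
begin

lemma has_finite_limits: "has_finite_limits C"
  using r_regular unfolding r_regular_def by blast

lemma epi_pullback_stable: "is_pullback C f g p q \<Longrightarrow> epi C g \<Longrightarrow> epi C p"
  using r_regular unfolding r_regular_def by blast

lemma epi_regular_mono_factorization:
  assumes "h \<in> Ar C"
  obtains e m where "epi C e" "regular_mono C m" "Dom C m = Cod C e" "m \<cdot> e = h"
  using r_regular assms unfolding r_regular_def by blast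

lemma inv_img_is_pullback:
  assumes "m \<in> Ar C" "g \<in> Ar C" "Cod C m = Cod C g"
  obtains p where "is_pullback C m g p (inv_img C g m)"
proof -
  have "\<exists>q p. is_pullback C m g p q" using pullback_exists[OF has_finite_limits assms] by blast
  from someI_ex[OF this] show ?thesis using that unfolding inv_img_def by blast
qed

lemma inv_img_arr:
  assumes "m \<in> Ar C" "g \<in> Ar C" "Cod C m = Cod C g"
  shows "inv_img C g m \<in> Ar C" "Cod C (inv_img C g m) = Dom C g"
proof -
  obtain p where "is_pullback C m g p (inv_img C g m)" using inv_img_is_pullback[OF assms] .
  from pullbackD(4,7)[OF this] show "inv_img C g m \<in> Ar C" "Cod C (inv_img C g m) = Dom C g" .
qed

lemma sub_le_inv_img_iff:
  assumes "m \<in> Ar C" "g \<in> Ar C" "Cod C m = Cod C g" "x \<in> Ar C" "Cod C x = Dom C g"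
  shows "sub_le C x (inv_img C g m) \<longleftrightarrow> sub_le C (g \<cdot> x) m"
proof -
  obtain p where "is_pullback C m g p (inv_img C g m)" using inv_img_is_pullback[OF assms(1-3)] .
  from sub_le_pullback_iff[OF this assms(4,5)] show ?thesis .
qed

lemma inv_img_reg_sub:
  assumes m: "m \<in> reg_sub C X" and g: "g \<in> hom C Y X"
  shows "inv_img C g m \<in> reg_sub C Y"
proof -
  obtain s1 s2 where eq: "is_equalizer C s1 s2 m"
    using m unfolding reg_sub_def regular_mono_def by blast
  have "m \<in> Ar C" "g \<in> Ar C" "Cod C m = Cod C g" "Dom C g = Y"
    using m g regular_mono_arr by (auto simp: reg_sub_def hom_iff)
  then obtain p where pb: "is_pullback C m g p (inv_img C g m)"
    using inv_img_is_pullback by blast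
  have "regular_mono C (inv_img C g m)"
    using equalizer_pullback[OF pb eq] unfolding regular_mono_def by blast
  then show ?thesis using pullbackD(7)[OF pb] \<open>Dom C g = Y\<close> by (simp add: reg_sub_def)
qed

lemma inv_img_pullback_square_le:
  assumes sq: "is_pullback C piX f fz piY"
    and B: "B \<in> Ar C" "Cod C B = Cod C f" and S: "S \<in> Ar C" "Cod C S = Cod C fz"
    and le: "sub_le C (inv_img C piX B) S"
  shows "sub_le C (inv_img C piY (inv_img C f B)) (inv_img C fz S)"
proof -
  note sq' = pullbackD[OF sq]
  define c where "c = inv_img C f B"
  define t where "t = inv_img C piY c"
  have c: "c \<in> Ar C" "Cod C c = Cod C piY"
    using inv_img_arr[OF B(1) sq'(2) B(2)] sq' unfolding c_def by simp_all
  have t: "t \<in> Ar C" "Cod C t = Dom C fz"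
    using inv_img_arr[OF c(1) sq'(4) c(2)] sq' unfolding t_def by simp_all
  have "sub_le C (piY \<cdot> t) c"
    using sub_le_inv_img_iff[OF c(1) sq'(4) c(2) t(1)] sub_le_refl[OF t(1)] t sq' unfolding t_def by simp
  then have "sub_le C (f \<cdot> (piY \<cdot> t)) B"
    using sub_le_inv_img_iff[OF B(1) sq'(2) B(2)] t sq' unfolding c_def by (simp add: comp_arr)
  moreover have "f \<cdot> (piY \<cdot> t) = piX \<cdot> (fz \<cdot> t)"
    using t sq'(1-8) by (simp add: comp_assoc flip: sq'(9))
  ultimately have "sub_le C (fz \<cdot> t) (inv_img C piX B)"
    using sub_le_inv_img_iff[OF B(1) sq'(1)] B(2) t sq' by (simp add: comp_arr)
  then have "sub_le C (fz \<cdot> t) S"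
    using sub_le_trans[OF _ le] inv_img_arr[OF B(1) sq'(1)] B(2) sq' S(1) by simp
  then show ?thesis
    using sub_le_inv_img_iff[OF S(1) sq'(3) S(2) t(1)] t unfolding t_def c_def by simp
qed

lemma inv_img_image_le:
  assumes sq: "is_pullback C piX f fz piY"
    and S: "regular_mono C S" "Cod C S = Cod C fz"
    and D: "D \<in> Ar C" "Cod C D = Dom C f"
    and le: "sub_le C (inv_img C piY D) (inv_img C fz S)"
    and e: "epi C e" and m: "regular_mono C m" "Dom C m = Cod C e" "m \<cdot> e = f \<cdot> D"
  shows "sub_le C (inv_img C piX m) S"
proof -
  note sq' = pullbackD[OF sq]
  obtain s1 s2 where eq: "is_equalizer C s1 s2 S" using S(1) unfolding regular_mono_def by blast
  have e': "e \<in> Ar C" using e unfolding epi_def by blast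
  have m': "m \<in> Ar C" using regular_mono_arr[OF m(1)] .
  have mX: "Cod C m = Cod C piX" and eD: "Dom C e = Dom C D"
    using comp_arr[OF e' m' m(2)[symmetric]] comp_arr[OF D(1) sq'(2) D(2)] m(3) sq'(5) by simp_all
  define q where "q = inv_img C piX m"
  obtain p where pb: "is_pullback C m piX p q"
    using inv_img_is_pullback[OF m' sq'(1) mX] unfolding q_def .
  note pb' = pullbackD[OF pb]
  obtain k l where kl: "is_pullback C p e k l"
    using pullback_exists[OF has_finite_limits pb'(3) e'] pb'(6) m(2) by auto
  note kl' = pullbackD[OF kl]
  have "piX \<cdot> (q \<cdot> k) = (m \<cdot> p) \<cdot> k" using pb'(1-8) kl' by (simp add: comp_assoc flip: pb'(9))
  also have "\<dots> = (m \<cdot> e) \<cdot> l" using pb'(1-8) kl' m' m(2) by (simp add: comp_assoc[symmetric])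
  also have "\<dots> = f \<cdot> (D \<cdot> l)" using kl' D sq' eD by (simp add: comp_assoc m(3))
  finally have square: "piX \<cdot> (q \<cdot> k) = f \<cdot> (D \<cdot> l)" .
  have qk: "q \<cdot> k \<in> Ar C" "Cod C (q \<cdot> k) = Dom C piX" "Dom C (q \<cdot> k) = Dom C k"
    and Dl: "D \<cdot> l \<in> Ar C" "Cod C (D \<cdot> l) = Dom C f" "Dom C (D \<cdot> l) = Dom C k"
    using pb' kl' eD D by (simp_all add: comp_arr)
  obtain w where w: "w \<in> hom C (Dom C k) (Dom C fz)" "fz \<cdot> w = q \<cdot> k" "piY \<cdot> w = D \<cdot> l"
    using pullback_lift[OF sq qk(1) Dl(1) qk(2) Dl(2) _ square] qk(3) Dl(3) by auto
  have w': "w \<in> Ar C" "Cod C w = Dom C piY" using w(1) sq' by (simp_all add: hom_iff)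
  have "sub_le C (piY \<cdot> w) D" using sub_le_comp[OF D(1) kl'(4)] kl' eD w(3) by simp
  then have "sub_le C w (inv_img C piY D)"
    using sub_le_inv_img_iff[OF D(1) sq'(4)] D(2) sq'(7) w' by simp
  then have "sub_le C w (inv_img C fz S)"
    using sub_le_trans[OF _ le] inv_img_arr S sq' D(1) D(2) regular_mono_arr[OF S(1)] by simp
  then have "sub_le C (q \<cdot> k) S"
    using sub_le_inv_img_iff[OF regular_mono_arr[OF S(1)] sq'(3) S(2)] w w' sq' by simp
  then show ?thesis
    using sub_le_equalizer_cancel_epi[OF eq epi_pullback_stable[OF kl e] pb'(4)] kl' pb' S(2) sq'(6)
    unfolding q_def by simp
qed

lemma inv_img_le_of_cover:
  assumes sq: "is_pullback C piX f fz piY"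
    and S: "regular_mono C S" "Cod C S = Cod C fz"
    and B: "\<And>i. i \<in> I \<Longrightarrow> B i \<in> Ar C \<and> Cod C (B i) = Cod C f"
    and cover: "\<forall>D \<in> reg_sub C (Cod C f). sub_le C (inv_img C piX D) S \<longrightarrow>
                  (\<exists>i \<in> I. sub_le C D (B i))"
    and D: "D \<in> Ar C" "Cod C D = Dom C f"
    and le: "sub_le C (inv_img C piY D) (inv_img C fz S)"
  shows "\<exists>i \<in> I. sub_le C D (inv_img C f (B i))"
proof -
  note sq' = pullbackD[OF sq]
  obtain e m where e: "epi C e" and m: "regular_mono C m" "Dom C m = Cod C e" "m \<cdot> e = f \<cdot> D"
    by (rule epi_regular_mono_factorization[OF comp_arr(1)[OF D(1) sq'(2) D(2)]])
  have e': "e \<in> Ar C" and m': "m \<in> Ar C" using e regular_mono_arr[OF m(1)] by (simp_all add: epi_def)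
  have "sub_le C (inv_img C piX m) S" using inv_img_image_le[OF sq S D le e m] .
  moreover have "m \<in> reg_sub C (Cod C f)"
    using comp_arr(3)[OF e' m' m(2)[symmetric]] comp_arr(3)[OF D(1) sq'(2) D(2)] m
    by (simp add: reg_sub_def)
  ultimately obtain i where i: "i \<in> I" "sub_le C m (B i)" using cover by blast
  have "sub_le C (f \<cdot> D) m" using sub_le_comp[OF m' e' m(2)[symmetric]] m(3) by simp
  then have "sub_le C (f \<cdot> D) (B i)" using sub_le_trans[OF _ i(2) m'] B[OF i(1)] by blast
  then show ?thesis
    using sub_le_inv_img_iff[OF _ sq'(2) _ D] B[OF i(1)] i(1) by blast
qed

end

theorem mainTheorem7:
  fixes C :: "('o,'a) cat"
    and X Y Z XZ YZ :: 'o
    and f piX pZX piY pZY fz S :: 'a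
    and B :: "nat \<Rightarrow> 'a" and n :: nat
  assumes reg: "r_regular C"
    and f: "f \<in> hom C Y X" and Z: "Z \<in> Ob C"
    and prodX: "is_product C X Z XZ piX pZX"
    and prodY: "is_product C Y Z YZ piY pZY"
    and fz: "fz \<in> hom C YZ XZ" "Comp C piX fz = Comp C f piY" "Comp C pZX fz = pZY"
    and S: "S \<in> reg_sub C XZ"
    and B: "\<forall>i \<in> {1..n}. B i \<in> reg_sub C X"
    and a: "\<forall>i \<in> {1..n}. sub_le C (inv_img C piX (B i)) S"
    and b: "\<forall>D \<in> reg_sub C X. sub_le C (inv_img C piX D) S \<longrightarrow>
              (\<exists>i \<in> {1..n}. sub_le C D (B i))"
  shows "(\<forall>i \<in> {1..n}. inv_img C f (B i) \<in> reg_sub C Y) \<and>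
         (\<forall>i \<in> {1..n}. sub_le C (inv_img C piY (inv_img C f (B i))) (inv_img C fz S)) \<and>
         (\<forall>D \<in> reg_sub C Y. sub_le C (inv_img C piY D) (inv_img C fz S) \<longrightarrow>
              (\<exists>i \<in> {1..n}. sub_le C D (inv_img C f (B i))))"
proof -
  interpret r_regular_category C using reg by unfold_locales
  have sq: "is_pullback C piX f fz piY"
    using product_square_is_pullback[OF prodX prodY f fz] .
  have f': "Dom C f = Y" "Cod C f = X" and S': "regular_mono C S" "S \<in> Ar C" "Cod C S = Cod C fz"
    using f S fz(1) regular_mono_arr by (auto simp: reg_sub_def hom_iff)
  have B': "B i \<in> Ar C \<and> Cod C (B i) = Cod C f" if "i \<in> {1..n}" for i
    using B that f' regular_mono_arr by (auto simp: reg_sub_def)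
  show ?thesis
  proof (intro conjI ballI impI)
    fix i assume "i \<in> {1..n}"
    then show "inv_img C f (B i) \<in> reg_sub C Y" using inv_img_reg_sub B f by blast
    show "sub_le C (inv_img C piY (inv_img C f (B i))) (inv_img C fz S)"
      using inv_img_pullback_square_le[OF sq _ _ S'(2,3)] B' a \<open>i \<in> {1..n}\<close> by blast
  next
    fix D assume D: "D \<in> reg_sub C Y" and le: "sub_le C (inv_img C piY D) (inv_img C fz S)"
    have "D \<in> Ar C" "Cod C D = Dom C f" using D f' regular_mono_arr by (auto simp: reg_sub_def)
    then show "\<exists>i \<in> {1..n}. sub_le C D (inv_img C f (B i))"
      using inv_img_le_of_cover[where I = "{1..n}" and B = B, OF sq S'(1,3) B' _ _ _ le] b f'(2) by simp
  qed
qed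

end
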